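(* Let $\mathbf{k}$ be a commutative ring. Then $\beta_{\mathrm{QSym}_{\mathbf{k}}}=\Delta'_P$, i.e. for every composition $\gamma$, $$\sum_{\alpha\in\mathrm{Comp}}\xi_\alpha(M_\gamma)\otimes M_\alpha=\sum_{\substack{A\in\mathbb{N}^{\bullet,\bullet}_{\mathrm{red}};\\ (\mathrm{read}\,A)^{\mathrm{red}}=\gamma}}M_{\mathrm{column}\,A}\otimes M_{\mathrm{row}\,A},$$ where $\xi_\alpha$ is taken for $H=\mathrm{QSym}_{\mathbf{k}}$.
   Context: A composition is a finite sequence of positive integers (not identified with sequences padded by zeros); $\mathrm{Comp}$ is the set of all compositions; $|\alpha|$ is the sum of entries. For $\alpha=(\alpha_1,\ldots,\alpha_\ell)$, $M_\alpha=\sum_{1\le i_1<\cdots<i_\ell}x_{i_1}^{\alpha_1}\cdots x_{i_\ell}^{\alpha_\ell}$; $\mathrm{QSym}_{\mathbf{k}}\subseteq\mathbf{k}[[x_1,x_2,\ldots]]$ is the commutative connected graded Hopf algebra of quasisymmetric functions with basis $(M_\alpha)$, comultiplication $\Delta(M_{(b_1,\ldots,b_\ell)})=\sum_{i=0}^\ell M_{(b_1,\ldots,b_i)}\otimes M_{(b_{i+1},\ldots,b_\ell)}$. For a commutative connected graded $\mathbf{k}$-Hopf algebra $H$ and a composition $\alpha=(a_1,\ldots,a_k)$, $\xi_\alpha:H\to H$ is $m^{(k-1)}\circ\pi_\alpha\circ\Delta^{(k-1)}$, where $\Delta^{(k-1)}:H\to H^{\otimes k}$ is the iterated comultiplication ($\Delta^{(-1)}=\varepsilon$,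 $\Delta^{(0)}=\mathrm{id}$, $\Delta^{(k)}=(\mathrm{id}\otimes\Delta^{(k-1)})\circ\Delta$), $m^{(k-1)}:H^{\otimes k}\to H$ is $h_1\otimes\cdots\otimes h_k\mapsto h_1\cdots h_k$ ($m^{(-1)}$ the unit map), and $\pi_\alpha=\pi_{a_1}\otimes\cdots\otimes\pi_{a_k}$ with $\pi_n:H\to H$ the projection onto $H_n$. The map $\beta_H:H\to H\otimes\mathrm{QSym}_{\mathbf{k}}$ is $\beta_H(h)=\sum_{\alpha\in\mathrm{Comp}}\xi_\alpha(h)\otimes M_\alpha$. For a matrix $A=(a_{i,j})\in\mathbb{N}^{u\times v}$: $\mathrm{column}\,A\in\mathbb{N}^v$ has $j$-th entry $\sum_i a_{i,j}$; $\mathrm{row}\,A\in\mathbb{N}^u$ has $i$-th entry $\sum_j a_{i,j}$; $\mathrm{read}\,A=(a_{1,1},\ldots,a_{1,v},a_{2,1},\ldots,a_{2,v},\ldots,a_{u,1},\ldots,a_{u,v})$. $A$ is reduced if $\mathrm{row}\,A$ and $\mathrm{column}\,A$ have no zero entries. $\mathbb{N}^{\bullet,\bullet}_{\mathrm{red}}$ is the set of reduced matrices in $\mathbb{N}^{u\times v}$ over all $u,v\in\mathbb{N}$. For $w\in\mathbb{N}^k$, $w^{\mathrm{red}}$ is the composition obtained by deleting zero entries. The second comultiplication $\Delta_P:\mathrm{QSym}_{\mathbf{k}}\to\mathrm{QSym}_{\mathbf{k}}\otimes\mathrm{QSym}_{\mathbf{k}}$ is the $\mathbf{k}$-linear map $\Delta_P(M_\gamma)=\sum_{A\in\mathbb{N}^{\bullet,\bullet}_{\mathrm{red}},\,(\mathrm{read}\,A)^{\mathrm{red}}=\gamma}M_{\mathrm{row}\,A}\otimes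 M_{\mathrm{column}\,A}$, and $\Delta'_P=\tau\circ\Delta_P$ with $\tau$ the twist map $x\otimes y\mapsto y\otimes x$. *)

theory Defs
  imports Main "HOL-Library.Poly_Mapping"
begin

definition Comp :: "nat list set" where
  "Comp = {\<alpha>. \<forall>a\<in>set \<alpha>. 0 < a}"

definition csize :: "nat list \<Rightarrow> nat" where
  "csize \<alpha> = sum_list \<alpha>"

type_synonym monomial = "nat \<Rightarrow>\<^sub>0 nat"
type_synonym 'k ps = "monomial \<Rightarrow> 'k"

definition ps_one :: "'k::comm_ring_1 ps" where
  "ps_one = (\<lambda>m. if m = 0 then 1 else 0)"

definition ps_mult :: "'k::comm_ring_1 ps \<Rightarrow> 'k ps \<Rightarrow> 'k ps" where
  "ps_mult f g = (\<lambda>m. \<Sum>p\<in>{(a, b). a + b = m}. f (fst p) * g (snd p))"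

definition ps_prod :: "'k::comm_ring_1 ps list \<Rightarrow> 'k ps" where
  "ps_prod fs = foldr ps_mult fs ps_one"

definition ps_smult :: "'k::comm_ring_1 \<Rightarrow> 'k ps \<Rightarrow> 'k ps" where
  "ps_smult c f = (\<lambda>m. c * f m)"

definition mdeg :: "monomial \<Rightarrow> nat" where
  "mdeg m = (\<Sum>i\<in>Poly_Mapping.keys m. Poly_Mapping.lookup m i)"

definition homog :: "nat \<Rightarrow> 'k::comm_ring_1 ps \<Rightarrow> 'k ps" where
  "homog n f = (\<lambda>m. if mdeg m = n then f m else 0)"

definition compo_of :: "monomial \<Rightarrow> nat list" where
  "compo_of m = map (Poly_Mapping.lookup m) (sorted_list_of_set (Poly_Mapping.keys m))"

text \<open>monomial quasisymmetric function M_alpha (variables indexed from 0)\<close>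
definition Mq :: "nat list \<Rightarrow> 'k::comm_ring_1 ps" where
  "Mq \<alpha> = (\<lambda>m. if compo_of m = \<alpha> then 1 else 0)"

definition lf_sum :: "'i set \<Rightarrow> ('i \<Rightarrow> 'x \<Rightarrow> 'k::comm_ring_1) \<Rightarrow> 'x \<Rightarrow> 'k" where
  "lf_sum I F = (\<lambda>x. \<Sum>i\<in>{i\<in>I. F i x \<noteq> 0}. F i x)"

text \<open>An element of the k-fold tensor power QSym^{(x)k} is represented by its
  coefficients in the basis M_{b_1} (x) ... (x) M_{b_k}, indexed by lists [b_1,...,b_k]
  of compositions.  iter_coprod k gamma is Delta^{(k-1)}(M_gamma):
  Delta^{(-1)} = counit, Delta^{(0)} = id, Delta^{(k)} = (id (x) Delta^{(k-1)}) o Delta,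
  with Delta(M_gamma) = sum_i M_{take i gamma} (x) M_{drop i gamma}.\<close>
fun iter_coprod :: "nat \<Rightarrow> nat list \<Rightarrow> nat list list \<Rightarrow> 'k::comm_ring_1" where
  "iter_coprod 0 \<gamma> = (\<lambda>L. if L = [] \<and> \<gamma> = [] then 1 else 0)"
| "iter_coprod (Suc 0) \<gamma> = (\<lambda>L. if L = [\<gamma>] then 1 else 0)"
| "iter_coprod (Suc (Suc n)) \<gamma> =
     (\<lambda>L. \<Sum>i\<in>{0..length \<gamma>}.
            (if L \<noteq> [] \<and> hd L = take i \<gamma> then iter_coprod (Suc n) (drop i \<gamma>) (tl L) else 0))"

text \<open>xi_alpha(M_gamma) = m^{(k-1)} (pi_alpha (Delta^{(k-1)} M_gamma)), where
  pi_alpha = pi_{a_1} (x) ... (x) pi_{a_k} and m^{(k-1)} multiplies the tensor factors.\<close>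
definition xi :: "nat list \<Rightarrow> nat list \<Rightarrow> 'k::comm_ring_1 ps" where
  "xi \<alpha> \<gamma> = lf_sum {L. iter_coprod (length \<alpha>) \<gamma> L \<noteq> (0::'k)}
      (\<lambda>L. ps_smult (iter_coprod (length \<alpha>) \<gamma> L)
               (ps_prod (map2 (\<lambda>a \<beta>. homog a (Mq \<beta>)) \<alpha> L)))"

text \<open>f (x) g is identified with f(x) g(y), i.e. the function (m,n) |-> f m * g n.\<close>
definition ps_tensor :: "'k::comm_ring_1 ps \<Rightarrow> 'k ps \<Rightarrow> (monomial \<times> monomial \<Rightarrow> 'k)" where
  "ps_tensor f g = (\<lambda>(m, n). f m * g n)"

text \<open>A matrix in N^{u x v} is a triple (u, v, a) with a i j the entry in row i,
  column j (0-indexed), and a i j = 0 outside the range.\<close>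
type_synonym natmat = "nat \<times> nat \<times> (nat \<Rightarrow> nat \<Rightarrow> nat)"

definition natmats :: "natmat set" where
  "natmats = {(u, v, a). \<forall>i j. (u \<le> i \<or> v \<le> j) \<longrightarrow> a i j = 0}"

definition mcolumn :: "natmat \<Rightarrow> nat list" where
  "mcolumn A = (case A of (u, v, a) \<Rightarrow> map (\<lambda>j. \<Sum>i<u. a i j) [0..<v])"

definition mrow :: "natmat \<Rightarrow> nat list" where
  "mrow A = (case A of (u, v, a) \<Rightarrow> map (\<lambda>i. \<Sum>j<v. a i j) [0..<u])"

definition mread :: "natmat \<Rightarrow> nat list" where
  "mread A = (case A of (u, v, a) \<Rightarrow> concat (map (\<lambda>i. map (\<lambda>j. a i j) [0..<v]) [0..<u]))"

definition reduced :: "natmat \<Rightarrow> bool" where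
  "reduced A \<longleftrightarrow> (\<forall>x\<in>set (mrow A). x \<noteq> 0) \<and> (\<forall>x\<in>set (mcolumn A). x \<noteq> 0)"

definition red :: "nat list \<Rightarrow> nat list" where
  "red w = filter (\<lambda>x. x \<noteq> 0) w"

end

theory Submission
  imports Defs "HOL-Library.FuncSet"
begin

text \<open>Iterating the deconcatenation coproduct, the iterated coproduct of M_gamma into k tensor factors is the sum of
  M_gamma_1 \<otimes> ... \<otimes> M_gamma_k over all ways of cutting gamma into k consecutive, possibly
  empty, pieces. Hence the coefficient of a monomial m in xi_alpha(M_gamma) counts the
  factorizations m = m_1 ... m_k with deg m_i = a_i whose exponent compositions concatenate to
  gamma. Writing the exponent vectors of m_1, ..., m_k, restricted to the variables of m, as the
  rows of a matrix is a bijection from these factorizations onto the reduced matrices A with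
  row A = alpha, column A the composition of m and (read A)^red = gamma. Comparing the
  coefficients of x^m \<otimes> y^n on both sides, where only alpha = the composition of n contributes,
  gives the identity.\<close>

lemma iter_coprod_eq:
  "iter_coprod k \<gamma> L = (if length L = k \<and> concat L = \<gamma> then (1::'k::comm_ring_1) else 0)"
proof (induction k \<gamma> arbitrary: L rule: iter_coprod.induct)
  case (2 \<gamma>)
  then show ?case by (auto simp: length_Suc_conv)
next
  case (3 n \<gamma>)
  show ?case
  proof (cases L)
    case (Cons x xs)
    have IH: "iter_coprod (Suc n) (drop i \<gamma>) xs
        = (if length xs = Suc n \<and> concat xs = drop i \<gamma> then (1::'k) else 0)"
      if "i \<le> length \<gamma>" for i
      using "3.IH"[of i "[take i \<gamma>]" xs] that by simp
    have split: "x = take i \<gamma> \<and> concat xs = drop i \<gamma> \<longleftrightarrow> i = length x \<and> x @ concat xs = \<gamma>"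
      if "i \<le> length \<gamma>" for i
      using that by (auto simp: append_eq_conv_conj)
    have summand: "(if x = take i \<gamma> then iter_coprod (Suc n) (drop i \<gamma>) xs else 0)
        = (if i = length x \<and> length xs = Suc n \<and> x @ concat xs = \<gamma> then (1::'k) else 0)"
      if "i \<le> length \<gamma>" for i
      unfolding IH[OF that] using split[OF that] by (smt (verit))
    have "iter_coprod (Suc (Suc n)) \<gamma> L = (\<Sum>i\<in>{0..length \<gamma>}.
        if i = length x \<and> length xs = Suc n \<and> x @ concat xs = \<gamma> then (1::'k) else 0)"
      unfolding iter_coprod.simps Cons
      by (intro sum.cong refl) (metis atLeastAtMost_iff list.sel(1,3) list.discI summand)
    also have "\<dots> = (if length L = Suc (Suc n) \<and> concat L = \<gamma> then 1 else 0)"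
      using Cons by (auto simp: sum.delta)
    finally show ?thesis .
  qed simp
qed auto

lemma finite_summands:
  fixes m :: "'a \<Rightarrow>\<^sub>0 nat"
  shows "finite {p. \<exists>q. p + q = m}"
proof -
  let ?S = "{p. \<exists>q. p + q = m}" and ?K = "Poly_Mapping.keys m"
  let ?f = "\<lambda>p :: 'a \<Rightarrow>\<^sub>0 nat. restrict (Poly_Mapping.lookup p) ?K"
  have keys: "Poly_Mapping.keys p \<subseteq> ?K" if "p \<in> ?S" for p
    using that by (auto simp: in_keys_iff lookup_add)
  have "inj_on ?f ?S"
  proof (rule inj_onI)
    fix p p' assume "p \<in> ?S" "p' \<in> ?S" "?f p = ?f p'"
    then show "p = p'"
      using keys by (metis (no_types, lifting) in_keys_iff poly_mapping_eqI restrict_apply' subset_iff)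
  qed
  moreover have "?f ` ?S \<subseteq> Pi\<^sub>E ?K (\<lambda>x. {..Poly_Mapping.lookup m x})"
    by (auto simp: lookup_add)
  ultimately show ?thesis
    by (meson finite_PiE finite_atMost finite_keys finite_imageD finite_subset)
qed

lemma finite_summand_pairs:
  fixes m :: "'a \<Rightarrow>\<^sub>0 nat"
  shows "finite {(p, q). p + q = m}"
proof -
  have "{(p, q). p + q = m} \<subseteq> {p. \<exists>q. p + q = m} \<times> {q. \<exists>p. q + p = m}"
    by (auto, metis add.commute)
  then show ?thesis
    by (rule finite_subset) (intro finite_SigmaI finite_summands)
qed

lemma member_sum_list_summand:
  fixes ms :: "'a::comm_monoid_add list"
  assumes "p \<in> set ms"
  shows "\<exists>q. p + q = sum_list ms"
proof -
  obtain xs ys where "ms = xs @ p # ys" using split_list[OF assms] by blast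
  then have "p + (sum_list xs + sum_list ys) = sum_list ms" by (simp add: add_ac)
  then show ?thesis by blast
qed

lemma finite_sum_list_decompositions:
  fixes m :: "'a \<Rightarrow>\<^sub>0 nat"
  shows "finite {ms. length ms = n \<and> sum_list ms = m}"
proof (rule finite_subset)
  show "{ms. length ms = n \<and> sum_list ms = m} \<subseteq> {ms. set ms \<subseteq> {p. \<exists>q. p + q = m} \<and> length ms = n}"
    using member_sum_list_summand by blast
qed (intro finite_lists_length_eq finite_summands)

lemma finite_concat_splittings: "finite {L. length L = k \<and> concat L = xs}"
proof (rule finite_subset)
  let ?pieces = "{ys. set ys \<subseteq> set xs \<and> length ys \<le> length xs}"
  have "length ys \<le> length (concat L)" if "ys \<in> set L" for ys and L :: "'a list list"
    using that by (simp add: length_concat member_le_sum_list)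
  then show "{L. length L = k \<and> concat L = xs} \<subseteq> {L. set L \<subseteq> ?pieces \<and> length L = k}"
    by auto
  show "finite {L. set L \<subseteq> ?pieces \<and> length L = k}"
    by (intro finite_lists_length_eq finite_lists_length_le) simp
qed

lemma lf_sum_eq_sum:
  assumes "{i \<in> I. F i x \<noteq> 0} \<subseteq> J" "finite J" "J \<subseteq> I"
  shows "lf_sum I F x = (\<Sum>i\<in>J. F i x)"
  unfolding lf_sum_def using assms by (intro sum.mono_neutral_left) auto

definition factorizations :: "nat list \<Rightarrow> monomial \<Rightarrow> monomial list set" where
  "factorizations \<alpha> m = {ms. sum_list ms = m \<and> map mdeg ms = \<alpha>}"

lemma finite_factorizations: "finite (factorizations \<alpha> m)"
  by (rule finite_subset[OF _ finite_sum_list_decompositions[of "length \<alpha>" m]])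
    (auto simp: factorizations_def dest: arg_cong[where f = length])

lemma card_factorizations_Cons:
  "card {ms \<in> factorizations (a # \<alpha>) m. map compo_of ms = \<beta> # L}
     = (\<Sum>(p, q)\<in>{(p, q). p + q = m \<and> mdeg p = a \<and> compo_of p = \<beta>}.
          card {ms \<in> factorizations \<alpha> q. map compo_of ms = L})"
    (is "card ?C = (\<Sum>(p, q)\<in>?Q. card (?D q))")
proof -
  have fin: "finite ?Q"
    by (rule finite_subset[OF _ finite_summand_pairs[of m]]) auto
  have "?C = (\<lambda>((p, q), ms). p # ms) ` (SIGMA (p, q):?Q. ?D q)"
  proof
    show "?C \<subseteq> (\<lambda>((p, q), ms). p # ms) ` (SIGMA (p, q):?Q. ?D q)"
    proof
      fix ms assume "ms \<in> ?C"
      then obtain p ms' where "ms = p # ms'" "((p, sum_list ms'), ms') \<in> (SIGMA (p, q):?Q. ?D q)"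
        by (cases ms) (auto simp: factorizations_def)
      then show "ms \<in> (\<lambda>((p, q), ms). p # ms) ` (SIGMA (p, q):?Q. ?D q)"
        by force
    qed
  qed (auto simp: factorizations_def)
  also have "card \<dots> = card (SIGMA (p, q):?Q. ?D q)"
    by (rule card_image) (auto simp: inj_on_def factorizations_def)
  also have "\<dots> = (\<Sum>(p, q)\<in>?Q. card (?D q))"
    using fin finite_factorizations by (subst card_SigmaI) (auto simp: case_prod_beta)
  finally show ?thesis .
qed

lemma homog_Mq: "homog a (Mq \<beta>) p = (if mdeg p = a \<and> compo_of p = \<beta> then 1 else 0)"
  by (simp add: homog_def Mq_def)

lemma ps_prod_homog_Mq:
  assumes "length \<alpha> = length L"
  shows "ps_prod (map2 (\<lambda>a \<beta>. homog a (Mq \<beta>)) \<alpha> L) m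
       = (of_nat (card {ms \<in> factorizations \<alpha> m. map compo_of ms = L}) :: 'k::comm_ring_1)"
  using assms
proof (induction \<alpha> L arbitrary: m rule: list_induct2)
  case Nil
  have "{ms \<in> factorizations [] m. map compo_of ms = []} = (if m = 0 then {[]} else {})"
    by (auto simp: factorizations_def)
  then show ?case by (simp add: ps_prod_def ps_one_def)
next
  case (Cons a \<alpha> \<beta> L)
  let ?P = "{(p, q). p + q = m}"
  let ?Q = "{(p, q). p + q = m \<and> mdeg p = a \<and> compo_of p = \<beta>}"
  let ?card = "\<lambda>q. card {ms \<in> factorizations \<alpha> q. map compo_of ms = L}"
  have "ps_prod (map2 (\<lambda>a \<beta>. homog a (Mq \<beta>)) (a # \<alpha>) (\<beta> # L)) m
      = (\<Sum>(p, q)\<in>?P. if mdeg p = a \<and> compo_of p = \<beta> then of_nat (?card q) else (0::'k))"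
    by (simp add: ps_prod_def ps_mult_def homog_Mq Cons.IH[unfolded ps_prod_def] case_prod_beta
        cong: if_cong) (rule sum.cong; simp)
  also have "\<dots> = (\<Sum>(p, q)\<in>?Q. of_nat (?card q))"
    by (rule sum.mono_neutral_cong_right[OF finite_summand_pairs]) (auto split: if_splits)
  also have "\<dots> = of_nat (card {ms \<in> factorizations (a # \<alpha>) m. map compo_of ms = \<beta> # L})"
    by (simp add: card_factorizations_Cons case_prod_beta)
  finally show ?case .
qed

lemma xi_eq_card_factorizations:
  "xi \<alpha> \<gamma> m = (of_nat (card {ms \<in> factorizations \<alpha> m. concat (map compo_of ms) = \<gamma>}) :: 'k::comm_ring_1)"
proof -
  let ?S = "{L. length L = length \<alpha> \<and> concat L = \<gamma>}"
  let ?C = "\<lambda>L. {ms \<in> factorizations \<alpha> m. map compo_of ms = L}"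
  have "xi \<alpha> \<gamma> m = (\<Sum>L\<in>?S. of_nat (card (?C L)) :: 'k)"
    unfolding xi_def iter_coprod_eq
    by (subst lf_sum_eq_sum[of _ _ _ ?S]) (auto simp: finite_concat_splittings ps_smult_def ps_prod_homog_Mq)
  also have "\<dots> = of_nat (card (\<Union>L\<in>?S. ?C L))"
    by (subst card_UN_disjoint) (auto simp: finite_concat_splittings finite_factorizations)
  also have "(\<Union>L\<in>?S. ?C L) = {ms \<in> factorizations \<alpha> m. concat (map compo_of ms) = \<gamma>}"
    by (auto simp: factorizations_def)
  finally show ?thesis .
qed

definition sorted_keys :: "monomial \<Rightarrow> nat list" where
  "sorted_keys m = sorted_list_of_set (Poly_Mapping.keys m)"

lemma set_sorted_keys: "set (sorted_keys m) = Poly_Mapping.keys m"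
  and distinct_sorted_keys: "distinct (sorted_keys m)"
  and sorted_sorted_keys: "sorted (sorted_keys m)"
  by (auto simp: sorted_keys_def)

lemma compo_of_eq_map_sorted_keys: "compo_of m = map (Poly_Mapping.lookup m) (sorted_keys m)"
  by (simp add: compo_of_def sorted_keys_def)

lemma compo_of_pos: "a \<in> set (compo_of m) \<Longrightarrow> 0 < a"
  by (auto simp: compo_of_def in_keys_iff)

lemma lookup_sum_list:
  "Poly_Mapping.lookup (sum_list ms) x = (\<Sum>i<length ms. Poly_Mapping.lookup (ms ! i) x)"
proof -
  have "Poly_Mapping.lookup (sum_list ms) x = sum_list (map (\<lambda>p. Poly_Mapping.lookup p x) ms)"
    by (induction ms) (auto simp: lookup_add)
  then show ?thesis by (simp add: sum_list_sum_nth atLeast0LessThan)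
qed

lemma keys_nth_subset_keys_sum_list:
  fixes ms :: "('a \<Rightarrow>\<^sub>0 nat) list"
  assumes "i < length ms"
  shows "Poly_Mapping.keys (ms ! i) \<subseteq> Poly_Mapping.keys (sum_list ms)"
proof -
  obtain q where "ms ! i + q = sum_list ms"
    using member_sum_list_summand[OF nth_mem[OF assms]] by blast
  then show ?thesis by (auto simp: in_keys_iff lookup_add dest: sym)
qed

lemma mdeg_eq_sum_sorted_keys:
  assumes "Poly_Mapping.keys p \<subseteq> Poly_Mapping.keys m"
  shows "mdeg p = (\<Sum>j<length (sorted_keys m). Poly_Mapping.lookup p (sorted_keys m ! j))"
proof -
  have "mdeg p = (\<Sum>x\<in>Poly_Mapping.keys m. Poly_Mapping.lookup p x)"
    unfolding mdeg_def using assms by (intro sum.mono_neutral_left) (auto simp: in_keys_iff)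
  also have "\<dots> = sum_list (map (Poly_Mapping.lookup p) (sorted_keys m))"
    by (simp add: sum_list_distinct_conv_sum_set distinct_sorted_keys set_sorted_keys)
  finally show ?thesis by (simp add: sum_list_sum_nth atLeast0LessThan)
qed

lemma compo_of_eq_filter_sorted_keys:
  assumes "Poly_Mapping.keys p \<subseteq> Poly_Mapping.keys m"
  shows "compo_of p = filter (\<lambda>x. x \<noteq> 0) (map (Poly_Mapping.lookup p) (sorted_keys m))"
proof -
  have "sorted_list_of_set (Poly_Mapping.keys p) = filter (\<lambda>x. x \<in> Poly_Mapping.keys p) (sorted_keys m)"
    using assms
    by (intro sorted_distinct_set_unique)
      (auto simp: sorted_wrt_filter set_sorted_keys distinct_sorted_keys sorted_sorted_keys)
  then show ?thesis unfolding compo_of_def by (simp add: filter_map o_def in_keys_iff)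
qed

definition factorization_matrix :: "monomial \<Rightarrow> monomial list \<Rightarrow> natmat" where
  "factorization_matrix m ms = (length ms, length (sorted_keys m),
     \<lambda>i j. if i < length ms \<and> j < length (sorted_keys m)
           then Poly_Mapping.lookup (ms ! i) (sorted_keys m ! j) else 0)"

lemma factorization_matrix_in_natmats: "factorization_matrix m ms \<in> natmats"
  by (auto simp: factorization_matrix_def natmats_def)

lemma mcolumn_factorization_matrix:
  "mcolumn (factorization_matrix (sum_list ms) ms) = compo_of (sum_list ms)"
  by (intro nth_equalityI)
    (auto simp: mcolumn_def factorization_matrix_def compo_of_eq_map_sorted_keys lookup_sum_list)

lemma mrow_factorization_matrix:
  "mrow (factorization_matrix (sum_list ms) ms) = map mdeg ms"
  by (intro nth_equalityI)
    (auto simp: mrow_def factorization_matrix_def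
      mdeg_eq_sum_sorted_keys[OF keys_nth_subset_keys_sum_list])

lemma red_mread_factorization_matrix:
  "red (mread (factorization_matrix (sum_list ms) ms)) = concat (map compo_of ms)"
proof -
  let ?ks = "sorted_keys (sum_list ms)"
  have row: "red (map (\<lambda>j. if i < length ms \<and> j < length ?ks
               then Poly_Mapping.lookup (ms ! i) (?ks ! j) else 0) [0..<length ?ks])
           = compo_of (ms ! i)" if "i < length ms" for i
  proof -
    have "map (\<lambda>j. if i < length ms \<and> j < length ?ks
            then Poly_Mapping.lookup (ms ! i) (?ks ! j) else 0) [0..<length ?ks]
        = map (Poly_Mapping.lookup (ms ! i)) ?ks"
      using that by (intro nth_equalityI) auto
    then show ?thesis
      unfolding red_def compo_of_eq_filter_sorted_keys[OF keys_nth_subset_keys_sum_list[OF that]]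
      by (simp only:)
  qed
  have "red (mread (factorization_matrix (sum_list ms) ms))
      = concat (map (\<lambda>i. compo_of (ms ! i)) [0..<length ms])"
    unfolding mread_def factorization_matrix_def prod.case red_def filter_concat map_map o_def
    by (rule arg_cong[where f = concat], rule map_cong[OF refl], rule row[unfolded red_def]) simp
  also have "\<dots> = concat (map compo_of ms)"
    by (rule arg_cong[where f = concat], rule nth_equalityI) auto
  finally show ?thesis .
qed

lemma inj_on_factorization_matrix: "inj_on (factorization_matrix m) {ms. sum_list ms = m}"
proof (rule inj_onI)
  let ?ks = "sorted_keys m"
  fix ms ms' assume "ms \<in> {ms. sum_list ms = m}" "ms' \<in> {ms. sum_list ms = m}"
    and eq: "factorization_matrix m ms = factorization_matrix m ms'"
  then have sum: "sum_list ms = m" "sum_list ms' = m" by auto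
  have len: "length ms = length ms'"
    using eq by (simp add: factorization_matrix_def)
  show "ms = ms'"
  proof (rule nth_equalityI[OF len], rule poly_mapping_eqI)
    fix i x assume i: "i < length ms"
    show "Poly_Mapping.lookup (ms ! i) x = Poly_Mapping.lookup (ms' ! i) x"
    proof (cases "x \<in> Poly_Mapping.keys m")
      case True
      then obtain j where j: "j < length ?ks" "x = ?ks ! j"
        by (metis in_set_conv_nth set_sorted_keys)
      have "snd (snd (factorization_matrix m ms)) i j = snd (snd (factorization_matrix m ms')) i j"
        using eq by simp
      then show ?thesis using i j len by (simp add: factorization_matrix_def)
    next
      case False
      then have "x \<notin> Poly_Mapping.keys (ms ! i)" "x \<notin> Poly_Mapping.keys (ms' ! i)"
        using keys_nth_subset_keys_sum_list[of i ms] keys_nth_subset_keys_sum_list[of i ms'] i len sum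
        by auto
      then show ?thesis by (simp add: in_keys_iff)
    qed
  qed
qed

lemma natmat_eq_factorization_matrix:
  assumes A: "A \<in> natmats" and col: "mcolumn A = compo_of m"
  obtains ms where "sum_list ms = m" "factorization_matrix m ms = A"
proof -
  let ?ks = "sorted_keys m"
  obtain u v a where A_eq: "A = (u, v, a)" by (cases A)
  have zero: "a i j = 0" if "u \<le> i \<or> v \<le> j" for i j
    using A that by (auto simp: A_eq natmats_def)
  have v: "v = length ?ks"
    using arg_cong[OF col, of length] by (simp add: A_eq mcolumn_def compo_of_eq_map_sorted_keys)
  have col_sum: "(\<Sum>i<u. a i j) = Poly_Mapping.lookup m (?ks ! j)" if "j < v" for j
    using arg_cong[OF col, of "\<lambda>xs. xs ! j"] that v
    by (simp add: A_eq mcolumn_def compo_of_eq_map_sorted_keys)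
  \<comment> \<open>row \<open>i\<close> of \<open>A\<close> as a monomial; the keys are distinct, so at most one term is nonzero\<close>
  define f where "f i x = (\<Sum>j<v. if ?ks ! j = x then a i j else 0)" for i x
  have f_outside: "f i x = 0" if "x \<notin> set ?ks" for i x
    unfolding f_def using that v by (intro sum.neutral) auto
  have f_at: "f i (?ks ! j) = a i j" if "j < v" for i j
  proof -
    have "f i (?ks ! j) = (\<Sum>j'<v. if j' = j then a i j' else 0)"
      unfolding f_def using that v distinct_sorted_keys[of m]
      by (intro sum.cong refl) (auto simp: nth_eq_iff_index_eq)
    then show ?thesis using that by simp
  qed
  have finite_support: "finite {x. f i x \<noteq> 0}" for i
    by (rule finite_subset[of _ "set ?ks"]) (use f_outside in force, simp)
  have lookup_row: "Poly_Mapping.lookup (Abs_poly_mapping (f i)) = f i" for i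
    using finite_support by simp
  define ms where "ms = map (\<lambda>i. Abs_poly_mapping (f i)) [0..<u]"
  have "sum_list ms = m"
  proof (rule poly_mapping_eqI)
    fix x
    have "Poly_Mapping.lookup (sum_list ms) x = (\<Sum>i<u. f i x)"
      by (simp add: lookup_sum_list lookup_row ms_def)
    also have "\<dots> = Poly_Mapping.lookup m x"
    proof (cases "x \<in> set ?ks")
      case True
      then obtain j where "j < v" "x = ?ks ! j" using v by (metis in_set_conv_nth)
      then show ?thesis using col_sum f_at by simp
    next
      case False
      then show ?thesis using f_outside set_sorted_keys[of m] by (simp add: in_keys_iff)
    qed
    finally show "Poly_Mapping.lookup (sum_list ms) x = Poly_Mapping.lookup m x" .
  qed
  moreover have "factorization_matrix m ms = A"
    unfolding factorization_matrix_def A_eq using v zero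
    by (auto simp: ms_def lookup_row f_at intro!: ext)
  ultimately show ?thesis by (rule that)
qed

lemma card_reduced_matrices_eq_card_factorizations:
  assumes \<alpha>: "\<forall>a\<in>set \<alpha>. 0 < a"
  shows "card {A \<in> natmats. reduced A \<and> red (mread A) = \<gamma> \<and> mcolumn A = compo_of m \<and> mrow A = \<alpha>}
       = card {ms \<in> factorizations \<alpha> m. concat (map compo_of ms) = \<gamma>}"
proof -
  let ?F = "{ms \<in> factorizations \<alpha> m. concat (map compo_of ms) = \<gamma>}"
  have image: "factorization_matrix m ` ?F
      = {A \<in> natmats. reduced A \<and> red (mread A) = \<gamma> \<and> mcolumn A = compo_of m \<and> mrow A = \<alpha>}"
  proof (intro equalityI subsetI)
    fix A assume "A \<in> factorization_matrix m ` ?F"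
    then obtain ms where ms: "ms \<in> ?F" and A_eq: "A = factorization_matrix (sum_list ms) ms"
      and m_eq: "m = sum_list ms"
      by (auto simp: factorizations_def)
    have "mcolumn A = compo_of m" "mrow A = \<alpha>" "red (mread A) = \<gamma>"
      using ms unfolding A_eq m_eq mcolumn_factorization_matrix mrow_factorization_matrix
        red_mread_factorization_matrix by (auto simp: factorizations_def)
    moreover have "reduced A"
      unfolding reduced_def using calculation \<alpha> compo_of_pos by fastforce
    ultimately show "A \<in> {A \<in> natmats. reduced A \<and> red (mread A) = \<gamma> \<and> mcolumn A = compo_of m \<and> mrow A = \<alpha>}"
      using factorization_matrix_in_natmats A_eq by auto
  next
    fix A
    assume A: "A \<in> {A \<in> natmats. reduced A \<and> red (mread A) = \<gamma> \<and> mcolumn A = compo_of m \<and> mrow A = \<alpha>}"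
    then obtain ms where ms: "sum_list ms = m" "factorization_matrix m ms = A"
      using natmat_eq_factorization_matrix by blast
    then have "ms \<in> ?F"
      using A mrow_factorization_matrix[of ms] red_mread_factorization_matrix[of ms]
      by (auto simp: factorizations_def)
    then show "A \<in> factorization_matrix m ` ?F" using ms by blast
  qed
  have "inj_on (factorization_matrix m) ?F"
    by (rule inj_on_subset[OF inj_on_factorization_matrix]) (auto simp: factorizations_def)
  from card_image[OF this] show ?thesis unfolding image .
qed

theorem proposition5p3:
  fixes \<gamma> :: "nat list"
  assumes "\<gamma> \<in> Comp"
  shows "lf_sum Comp (\<lambda>\<alpha>. ps_tensor (xi \<alpha> \<gamma>) (Mq \<alpha>))
       = lf_sum {A \<in> natmats. reduced A \<and> red (mread A) = \<gamma>}
           (\<lambda>A. ps_tensor (Mq (mcolumn A)) (Mq (mrow A)) :: monomial \<times> monomial \<Rightarrow> 'k::comm_ring_1)"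
proof (rule ext, clarify)
  \<comment> \<open>the argument does not use that \<open>\<gamma>\<close> is a composition\<close>
  fix m n :: monomial
  let ?Matrices = "{A \<in> natmats. reduced A \<and> red (mread A) = \<gamma>}"
  let ?S = "{A \<in> natmats. reduced A \<and> red (mread A) = \<gamma> \<and> mcolumn A = compo_of m \<and> mrow A = compo_of n}"
  have "lf_sum Comp (\<lambda>\<alpha>. ps_tensor (xi \<alpha> \<gamma>) (Mq \<alpha>)) (m, n)
      = (\<Sum>\<alpha>\<in>{compo_of n}. ps_tensor (xi \<alpha> \<gamma>) (Mq \<alpha>) (m, n) :: 'k)"
    by (rule lf_sum_eq_sum) (auto simp: ps_tensor_def Mq_def Comp_def compo_of_pos)
  also have "\<dots> = xi (compo_of n) \<gamma> m"
    by (simp add: ps_tensor_def Mq_def)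
  also have "\<dots> = of_nat (card {ms \<in> factorizations (compo_of n) m. concat (map compo_of ms) = \<gamma>})"
    by (rule xi_eq_card_factorizations)
  also have "\<dots> = of_nat (card ?S)"
    by (simp add: card_reduced_matrices_eq_card_factorizations compo_of_pos)
  also have "\<dots> = (\<Sum>A\<in>?S. ps_tensor (Mq (mcolumn A)) (Mq (mrow A)) (m, n))"
    by (simp add: ps_tensor_def Mq_def)
  also have "?S = {A \<in> ?Matrices. ps_tensor (Mq (mcolumn A)) (Mq (mrow A)) (m, n) \<noteq> (0::'k)}"
    by (auto simp: ps_tensor_def Mq_def)
  also have "(\<Sum>A\<in>\<dots>. ps_tensor (Mq (mcolumn A)) (Mq (mrow A)) (m, n) :: 'k)
      = lf_sum ?Matrices (\<lambda>A. ps_tensor (Mq (mcolumn A)) (Mq (mrow A))) (m, n)"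
    by (simp only: lf_sum_def)
  finally show "lf_sum Comp (\<lambda>\<alpha>. ps_tensor (xi \<alpha> \<gamma>) (Mq \<alpha>)) (m, n)
      = (lf_sum ?Matrices (\<lambda>A. ps_tensor (Mq (mcolumn A)) (Mq (mrow A))) (m, n) :: 'k)" .
qed

end
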